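(* Let $(X,\leqslant)$ be a finite poset, $U$ a finite set of users with security function $\lambda\colon U\to X$, and $T=(X,E)$ a derivation out-tree with root $r$. Let $\phi=\phi_E$ be the key allocation function determined by $T$. Then \[ \sum_{x\in X,\ x\neq r}|U(x)|\cdot|\phi(x)| \;=\; \sum_{e\in E}\omega(e). \]
   Context: A derivation out-tree for $(X,\leqslant)$ is a spanning out-tree $T=(X,E)$ (a rooted tree on vertex set $X$ with all arcs oriented away from the root) such that $xy\in E$ implies $y<x$; its root $r$ is then the maximum element of $X$. Define $\phi_E\colon X\to 2^X$ by $\phi_E(r)=\{r\}$ and, for $x\neq r$, $\phi_E(x)=\{z\in X:\exists y\in X \text{ with } yz\in E,\ x\geqslant z,\ x\not\geqslant y\}$. For $u\in U$ write $U(x)=\{u\in U:\lambda(u)=x\}$. For $y,z\in X$ with $z<y$, let $\gamma(yz)=\{x\in X: x\geqslant z,\ x\not\geqslant y\}$ and define the weight $\omega(yz)=\sum_{x\in\gamma(yz)}|U(x)|$. *)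

theory Defs
  imports Main
begin

definition poset_on :: "'a set \<Rightarrow> ('a \<Rightarrow> 'a \<Rightarrow> bool) \<Rightarrow> bool" where
  "poset_on X le \<longleftrightarrow>
     (\<forall>x\<in>X. le x x) \<and>
     (\<forall>x\<in>X. \<forall>y\<in>X. le x y \<and> le y x \<longrightarrow> x = y) \<and>
     (\<forall>x\<in>X. \<forall>y\<in>X. \<forall>z\<in>X. le x y \<and> le y z \<longrightarrow> le x z)"

definition spanning_out_tree :: "'a set \<Rightarrow> ('a \<times> 'a) set \<Rightarrow> 'a \<Rightarrow> bool" where
  "spanning_out_tree X E r \<longleftrightarrow>
     r \<in> X \<and> E \<subseteq> X \<times> X \<and>
     (\<forall>y. (y, r) \<notin> E) \<and>
     (\<forall>x\<in>X. x \<noteq> r \<longrightarrow> (\<exists>!y. (y, x) \<in> E)) \<and>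
     (\<forall>x\<in>X. (r, x) \<in> E\<^sup>*)"

definition derivation_out_tree ::
  "'a set \<Rightarrow> ('a \<Rightarrow> 'a \<Rightarrow> bool) \<Rightarrow> ('a \<times> 'a) set \<Rightarrow> 'a \<Rightarrow> bool" where
  "derivation_out_tree X le E r \<longleftrightarrow>
     spanning_out_tree X E r \<and> (\<forall>(y, z)\<in>E. le z y \<and> z \<noteq> y)"

definition phiE ::
  "'a set \<Rightarrow> ('a \<Rightarrow> 'a \<Rightarrow> bool) \<Rightarrow> ('a \<times> 'a) set \<Rightarrow> 'a \<Rightarrow> 'a \<Rightarrow> 'a set" where
  "phiE X le E r x =
     (if x = r then {r}
      else {z \<in> X. \<exists>y\<in>X. (y, z) \<in> E \<and> le z x \<and> \<not> le y x})"

definition users_at :: "'u set \<Rightarrow> ('u \<Rightarrow> 'a) \<Rightarrow> 'a \<Rightarrow> 'u set" where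
  "users_at U lam x = {u \<in> U. lam u = x}"

definition gamma :: "'a set \<Rightarrow> ('a \<Rightarrow> 'a \<Rightarrow> bool) \<Rightarrow> 'a \<Rightarrow> 'a \<Rightarrow> 'a set" where
  "gamma X le y z = {x \<in> X. le z x \<and> \<not> le y x}"

definition weight ::
  "'a set \<Rightarrow> ('a \<Rightarrow> 'a \<Rightarrow> bool) \<Rightarrow> 'u set \<Rightarrow> ('u \<Rightarrow> 'a) \<Rightarrow> 'a \<Rightarrow> 'a \<Rightarrow> nat" where
  "weight X le U lam y z = (\<Sum>x\<in>gamma X le y z. card (users_at U lam x))"

end

theory Submission
  imports Defs
begin

text \<open>Both sides count the triples (u, x, yz) with u a user at level x \<noteq> r and yz an
arc with z \<le> x and y \<not>\<le> x. Grouping by the arc gives the weights; grouping by x, the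
arcs entering the down-set of x are in bijection with \<phi>(x) via their heads, since every
non-root vertex has a unique parent, and at the root no arc qualifies because r is the
maximum.\<close>

definition arcs_into_downset :: "('a \<Rightarrow> 'a \<Rightarrow> bool) \<Rightarrow> ('a \<times> 'a) set \<Rightarrow> 'a \<Rightarrow> ('a \<times> 'a) set" where
  "arcs_into_downset le E x = {(y, z) \<in> E. le z x \<and> \<not> le y x}"

lemma sum_weight_eq_sum_arcs_into_downset:
  assumes "finite X" and "finite E"
  shows "(\<Sum>(y, z)\<in>E. weight X le U lam y z)
       = (\<Sum>x\<in>X. card (users_at U lam x) * card (arcs_into_downset le E x))"
proof -
  let ?c = "\<lambda>x. card (users_at U lam x)"
  let ?cut = "\<lambda>e x. le (snd e) x \<and> \<not> le (fst e) x"
  have "(\<Sum>(y, z)\<in>E. weight X le U lam y z) = (\<Sum>e\<in>E. \<Sum>x\<in>X. if ?cut e x then ?c x else 0)"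
    unfolding weight_def gamma_def
    by (rule sum.cong) (auto simp: sum.If_cases[OF assms(1)] Int_def)
  also have "\<dots> = (\<Sum>x\<in>X. \<Sum>e\<in>E. if ?cut e x then ?c x else 0)"
    by (rule sum.swap)
  also have "\<dots> = (\<Sum>x\<in>X. ?c x * card (arcs_into_downset le E x))"
  proof (rule sum.cong)
    fix x
    have "{e \<in> E. ?cut e x} = arcs_into_downset le E x"
      unfolding arcs_into_downset_def by auto
    then show "(\<Sum>e\<in>E. if ?cut e x then ?c x else 0) = ?c x * card (arcs_into_downset le E x)"
      by (simp add: sum.If_cases[OF assms(2)] Int_def)
  qed simp
  finally show ?thesis .
qed

lemma derivation_out_tree_root_greatest:
  assumes "poset_on X le" and "derivation_out_tree X le E r" and "x \<in> X"
  shows "le x r"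
proof -
  have refl: "\<forall>x\<in>X. le x x"
    and trans: "\<forall>x\<in>X. \<forall>y\<in>X. \<forall>z\<in>X. le x y \<and> le y z \<longrightarrow> le x z"
    using assms(1) unfolding poset_on_def by blast+
  have tree: "r \<in> X" "E \<subseteq> X \<times> X" "(r, x) \<in> E\<^sup>*" and down: "\<forall>(y, z)\<in>E. le z y"
    using assms(2,3) unfolding derivation_out_tree_def spanning_out_tree_def by blast+
  from tree(3) have "x \<in> X \<and> le x r"
  proof (induction rule: rtrancl_induct)
    case base
    show ?case using tree(1) refl by blast
  next
    case (step y z)
    then have "y \<in> X" "z \<in> X" "le z y" using tree(2) down by auto
    then show ?case using step.IH trans tree(1) by blast
  qed
  then show ?thesis by blast
qed

lemma arcs_into_downset_root:
  assumes "poset_on X le" and "derivation_out_tree X le E r"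
  shows "arcs_into_downset le E r = {}"
proof -
  have "E \<subseteq> X \<times> X"
    using assms(2) unfolding derivation_out_tree_def spanning_out_tree_def by blast
  then show ?thesis
    using derivation_out_tree_root_greatest[OF assms]
    unfolding arcs_into_downset_def by auto
qed

lemma card_phiE_eq_card_arcs_into_downset:
  assumes "spanning_out_tree X E r" and "x \<noteq> r"
  shows "card (phiE X le E r x) = card (arcs_into_downset le E x)"
proof -
  have arcs: "E \<subseteq> X \<times> X" and root: "\<forall>y. (y, r) \<notin> E"
    and parent: "\<forall>z\<in>X. z \<noteq> r \<longrightarrow> (\<exists>!y. (y, z) \<in> E)"
    using assms(1) unfolding spanning_out_tree_def by blast+
  have "phiE X le E r x = snd ` arcs_into_downset le E x"
    using assms(2) arcs unfolding phiE_def arcs_into_downset_def by (auto simp: image_iff)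
  moreover have "inj_on snd (arcs_into_downset le E x)"
  proof (rule inj_onI)
    fix a b assume "a \<in> arcs_into_downset le E x" "b \<in> arcs_into_downset le E x"
      and "snd a = snd b"
    then obtain y y' z where ab: "a = (y, z)" "b = (y', z)" "(y, z) \<in> E" "(y', z) \<in> E"
      unfolding arcs_into_downset_def by (cases a, cases b) auto
    then have "z \<in> X" "z \<noteq> r" using arcs root by auto
    then show "a = b" using ab parent by blast
  qed
  ultimately show ?thesis by (simp add: card_image)
qed

theorem theorem2:
  fixes X :: "'a set" and le :: "'a \<Rightarrow> 'a \<Rightarrow> bool"
    and U :: "'u set" and lam :: "'u \<Rightarrow> 'a"
    and E :: "('a \<times> 'a) set" and r :: 'a
  assumes "finite X" and "poset_on X le"
    and "finite U" and "\<forall>u\<in>U. lam u \<in> X"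
    and "derivation_out_tree X le E r"
  shows "(\<Sum>x\<in>X - {r}. card (users_at U lam x) * card (phiE X le E r x))
         = (\<Sum>(y, z)\<in>E. weight X le U lam y z)"
proof -
  have tree: "spanning_out_tree X E r" and "r \<in> X" "E \<subseteq> X \<times> X"
    using assms(5) unfolding derivation_out_tree_def spanning_out_tree_def by blast+
  then have "finite E" using assms(1) by (meson finite_SigmaI finite_subset)
  then have "(\<Sum>(y, z)\<in>E. weight X le U lam y z)
      = (\<Sum>x\<in>X. card (users_at U lam x) * card (arcs_into_downset le E x))"
    by (rule sum_weight_eq_sum_arcs_into_downset[OF assms(1)])
  also have "\<dots> = (\<Sum>x\<in>X - {r}. card (users_at U lam x) * card (arcs_into_downset le E x))"
    using \<open>r \<in> X\<close> assms(1) arcs_into_downset_root[OF assms(2,5)] by (simp add: sum.remove)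
  also have "\<dots> = (\<Sum>x\<in>X - {r}. card (users_at U lam x) * card (phiE X le E r x))"
    using card_phiE_eq_card_arcs_into_downset[OF tree] by (auto intro: sum.cong)
  finally show ?thesis by simp
qed

end
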